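(* Fix $n\ge3$ and $M>0$ satisfying (A) and (B), and consider the environments $\Gamma^\epsilon$. Then for all sufficiently small $\epsilon>0$, the unanimity rule $f^{(n)}$ maximizes $W^\epsilon(f)$ among all SCFs $f:V^n\to[0,1]$ that are ordinal and anonymous.
   Context: Fix $n\ge 3$ agents $N=\{1,\dots,n\}$, choosing between Reform $R$ (agent $i$'s utility $v_i$) and Status quo $S$ (utility $0$). Let $M>0$ satisfy (A): $\frac{2}{n}\left[-M^2+M+n-2\right]+\frac{n-2}{n}\left[2M+n-4\right]<0$, and (B): $2M-(n-2)>0$. Let $V=\{-M^2,-1,1,M\}$. For $\epsilon\in[0,1/4]$, the environment $\Gamma^\epsilon$ has independent values $\tilde v_1,\dots,\tilde v_n$ with distributions: for agents $1,2$ ("high-stakes"): $\Pr(-M^2)=0.5-\epsilon$, $\Pr(-1)=\epsilon$, $\Pr(1)=\epsilon$, $\Pr(M)=0.5-\epsilon$; for agents $3,\dots,n$ ("low-stakes"): $\Pr(-M^2)=\epsilon$, $\Pr(-1)=0.5-\epsilon$, $\Pr(1)=0.5-\epsilon$, $\Pr(M)=\epsilon$. An SCF is any $f:V^n\to[0,1]$ (probability of choosing $R$). $f$ is anonymous if $f(v)=f(\pi v)$ for every $v\in V^n$ and every permutation $\pi$ of $N$, where $\pi v=(v_{\pi(1)},\dots,v_{\pi(n)})$. For $v\in V^n$ let $\chi(v)=\{i:v_i>0\}$; $f$ is ordinal if $f(v)=f(v')$ whenever $\chi(v)=\chi(v')$. The unanimity rule is $f^{(n)}(v)=1$ if $|\chi(v)|=n$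 and $0$ otherwise. The welfare of $f$ in $\Gamma^\epsilon$ is $W^\epsilon(f)=\mathbb{E}^\epsilon\big(f(\tilde v)\sum_i\tilde v_i\big)$, expectation under the distributions of $\Gamma^\epsilon$. *)

theory Defs
  imports "HOL-Combinatorics.Permutations" Complex_Main
begin

text \<open>Agents are indexed by 0,...,n-1; agents 0 and 1 are the high-stakes agents
(agents 1 and 2 of the paper). A profile is an element of PiE {..<n} (\<lambda>_. V).\<close>

definition Vset :: "real \<Rightarrow> real set" where
  "Vset M = {-(M^2), -1, 1, M}"

definition profiles :: "nat \<Rightarrow> real \<Rightarrow> (nat \<Rightarrow> real) set" where
  "profiles n M = PiE {..<n} (\<lambda>_. Vset M)"

definition pval :: "real \<Rightarrow> real \<Rightarrow> nat \<Rightarrow> real \<Rightarrow> real" where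
  "pval M eps i x =
     (if i < 2 then
        (if x = -(M^2) then 0.5 - eps else if x = -1 then eps
         else if x = 1 then eps else if x = M then 0.5 - eps else 0)
      else
        (if x = -(M^2) then eps else if x = -1 then 0.5 - eps
         else if x = 1 then 0.5 - eps else if x = M then eps else 0))"

definition welfare :: "nat \<Rightarrow> real \<Rightarrow> real \<Rightarrow> ((nat \<Rightarrow> real) \<Rightarrow> real) \<Rightarrow> real" where
  "welfare n M eps f =
     (\<Sum>v\<in>profiles n M. (\<Prod>i<n. pval M eps i (v i)) * (f v * (\<Sum>i<n. v i)))"

definition is_scf :: "nat \<Rightarrow> real \<Rightarrow> ((nat \<Rightarrow> real) \<Rightarrow> real) \<Rightarrow> bool" where
  "is_scf n M f \<longleftrightarrow> (\<forall>v\<in>profiles n M. 0 \<le> f v \<and> f v \<le> 1)"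

definition anonymous :: "nat \<Rightarrow> real \<Rightarrow> ((nat \<Rightarrow> real) \<Rightarrow> real) \<Rightarrow> bool" where
  "anonymous n M f \<longleftrightarrow>
     (\<forall>v\<in>profiles n M. \<forall>\<pi>. \<pi> permutes {..<n} \<longrightarrow> f v = f (v \<circ> \<pi>))"

definition chi :: "nat \<Rightarrow> (nat \<Rightarrow> real) \<Rightarrow> nat set" where
  "chi n v = {i. i < n \<and> v i > 0}"

definition ordinal :: "nat \<Rightarrow> real \<Rightarrow> ((nat \<Rightarrow> real) \<Rightarrow> real) \<Rightarrow> bool" where
  "ordinal n M f \<longleftrightarrow>
     (\<forall>v\<in>profiles n M. \<forall>w\<in>profiles n M. chi n v = chi n w \<longrightarrow> f v = f w)"

definition unanimity :: "nat \<Rightarrow> (nat \<Rightarrow> real) \<Rightarrow> real" where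
  "unanimity n v = (if card (chi n v) = n then 1 else 0)"

end

(*
  An ordinal anonymous SCF is constant on each class of profiles with the same
  number k of supporters, so its welfare is a combination, with weights f_k in
  [0,1], of the class values c_k(eps): the expected total value of R over the
  profiles with exactly k supporters.  Such a combination is maximised by
  choosing R exactly on the classes with c_k >= 0, which is what unanimity does
  once c_k < 0 for k < n and c_n > 0.

  At eps = 0 every agent independently takes the stake of its type (M or -M^2
  for the two high-stakes agents, 1 or -1 for the others) with probability 1/2.
  Counting k-subsets gives 2^n c_k(0) = C(n-1,k-1) A - C(n-1,k) B with
  A = 2M + n - 2 and B = 2M^2 + n - 2.  Condition (A) is equivalent to
  (n-1) A < B, which together with C(n-1,k-1) <= (n-1) C(n-1,k) makes c_k(0)
  negative for k < n, while c_n(0) = A / 2^n > 0.  Each c_k is a polynomial in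
  eps, so these strict signs persist for all sufficiently small eps.
*)
theory Submission
  imports Defs
begin

lemma obtain_permutes_image:
  assumes "finite U" "A \<subseteq> U" "B \<subseteq> U" "card A = card B"
  obtains p where "p permutes U" "p ` A = B"
proof -
  have "finite A" "finite B"
    using assms finite_subset by auto
  moreover from this have "card (U - A) = card (U - B)"
    using assms by (simp add: card_Diff_subset)
  ultimately obtain g h where g: "bij_betw g A B" and h: "bij_betw h (U - A) (U - B)"
    using finite_same_card_bij assms by (metis finite_Diff)
  define p where "p x = (if x \<in> A then g x else if x \<in> U then h x else x)" for x
  have "bij_betw p A B"
    using g by (rule bij_betw_cong[THEN iffD1, rotated]) (simp add: p_def)
  moreover have "bij_betw p (U - A) (U - B)"
    using h by (rule bij_betw_cong[THEN iffD1, rotated]) (simp add: p_def)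
  ultimately have "bij_betw p (A \<union> (U - A)) (B \<union> (U - B))"
    by (rule bij_betw_combine) auto
  then have "bij_betw p U U"
    using assms(2,3) by (simp add: Un_absorb1)
  then have "p permutes U"
    unfolding permutes_altdef using assms(2) by (auto simp: p_def)
  moreover have "p ` A = B"
    using g by (auto simp: p_def bij_betw_def)
  ultimately show thesis by (rule that)
qed

lemma ordinal_anonymous_card_chi_eq:
  assumes "ordinal n M f" "anonymous n M f" "v \<in> profiles n M" "w \<in> profiles n M"
    and "card (chi n w) = card (chi n v)"
  shows "f v = f w"
proof -
  obtain p where p: "p permutes {..<n}" and image: "p ` chi n w = chi n v"
    using obtain_permutes_image[of "{..<n}" "chi n w" "chi n v"] assms(5)
    by (auto simp: chi_def)
  have p_lt: "p i < n \<longleftrightarrow> i < n" for i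
    using p by (metis lessThan_iff permutes_in_image)
  have "v \<circ> p \<in> profiles n M"
    using assms(3) p p_lt
    by (auto simp: profiles_def PiE_def Pi_def extensional_def permutes_not_in)
  moreover have "chi n (v \<circ> p) = chi n w"
  proof -
    have "i \<in> chi n w \<longleftrightarrow> p i \<in> chi n v" for i
      using image permutes_inj[OF p] by (metis inj_image_mem_iff)
    then show ?thesis
      using p_lt by (auto simp: chi_def)
  qed
  ultimately have "f (v \<circ> p) = f w"
    using assms(1,4) unfolding ordinal_def by blast
  moreover have "f v = f (v \<circ> p)"
    using assms(2,3) p unfolding anonymous_def by blast
  ultimately show ?thesis by simp
qed

lemma sum_mult_fibrewise_const_le:
  fixes w f :: "'a \<Rightarrow> real" and g :: "'a \<Rightarrow> 'b"
  assumes "finite X"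
    and f_01: "\<And>x. x \<in> X \<Longrightarrow> 0 \<le> f x \<and> f x \<le> 1"
    and f_const: "\<And>x y. x \<in> X \<Longrightarrow> y \<in> X \<Longrightarrow> g x = g y \<Longrightarrow> f x = f y"
    and nonneg: "\<And>k. k \<in> g ` X \<Longrightarrow> P k \<Longrightarrow> 0 \<le> (\<Sum>x\<in>{x\<in>X. g x = k}. w x)"
    and nonpos: "\<And>k. k \<in> g ` X \<Longrightarrow> \<not> P k \<Longrightarrow> (\<Sum>x\<in>{x\<in>X. g x = k}. w x) \<le> 0"
  shows "(\<Sum>x\<in>X. w x * f x) \<le> (\<Sum>x\<in>X. w x * (if P (g x) then 1 else 0))"
proof -
  have "(\<Sum>x\<in>{x\<in>X. g x = k}. w x * f x)
      \<le> (\<Sum>x\<in>{x\<in>X. g x = k}. w x * (if P (g x) then 1 else 0))" if "k \<in> g ` X" for k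
  proof -
    obtain x0 where x0: "x0 \<in> X" "g x0 = k"
      using \<open>k \<in> g ` X\<close> by blast
    have "(\<Sum>x\<in>{x\<in>X. g x = k}. w x * f x) = f x0 * (\<Sum>x\<in>{x\<in>X. g x = k}. w x)"
      using f_const[OF _ x0(1)] x0(2) by (simp add: sum_distrib_left mult.commute)
    also have "\<dots> \<le> (if P k then 1 else 0) * (\<Sum>x\<in>{x\<in>X. g x = k}. w x)"
      using f_01[OF x0(1)] nonneg[OF that] nonpos[OF that]
      by (auto intro: mult_left_le_one_le mult_nonneg_nonpos)
    also have "\<dots> = (\<Sum>x\<in>{x\<in>X. g x = k}. w x * (if P (g x) then 1 else 0))"
      by (simp add: sum_distrib_left mult.commute)
    finally show ?thesis .
  qed
  then show ?thesis
    by (subst (1 2) sum.image_gen[OF \<open>finite X\<close>, where g = g]) (rule sum_mono)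
qed

(* C(|U|,k) - C(|U|-1,k) counts the k-subsets containing a given element;
   unlike C(|U|-1,k-1) it is also correct for k = 0, where k - 1 truncates to 0. *)
lemma sum_subsets_card_if_mem:
  fixes a b :: "'a \<Rightarrow> 'b::comm_ring_1"
  assumes "finite U"
  shows "(\<Sum>S\<in>{S. S \<subseteq> U \<and> card S = k}. \<Sum>i\<in>U. if i \<in> S then a i else b i)
       = (of_nat (card U choose k) - of_nat ((card U - 1) choose k)) * sum a U
         + of_nat ((card U - 1) choose k) * sum b U"
proof -
  let ?K = "{S. S \<subseteq> U \<and> card S = k}"
  have fin: "finite ?K"
    by (rule finite_subset[of _ "Pow U"]) (use assms in auto)
  have count: "(\<Sum>S\<in>?K. if i \<in> S then a i else b i)
      = (of_nat (card U choose k) - of_nat ((card U - 1) choose k)) * a i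
        + of_nat ((card U - 1) choose k) * b i" if "i \<in> U" for i
  proof -
    have "?K - {S. i \<in> S} = {S. S \<subseteq> U - {i} \<and> card S = k}"
      by auto
    then have without: "card (?K - {S. i \<in> S}) = (card U - 1) choose k"
      using assms that by (simp add: n_subsets)
    have "card (?K \<inter> {S. i \<in> S}) + card (?K - {S. i \<in> S}) = card U choose k"
      using card_Int_Diff[OF fin] assms by (simp add: n_subsets)
    then have "of_nat (card (?K \<inter> {S. i \<in> S})) + of_nat ((card U - 1) choose k)
        = (of_nat (card U choose k) :: 'b)"
      unfolding without by (simp flip: of_nat_add)
    then have with_i: "of_nat (card (?K \<inter> {S. i \<in> S}))
        = (of_nat (card U choose k) - of_nat ((card U - 1) choose k) :: 'b)"
      by (simp add: eq_diff_eq)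
    have "(\<Sum>S\<in>?K. if i \<in> S then a i else b i)
        = of_nat (card (?K \<inter> {S. i \<in> S})) * a i + of_nat (card (?K - {S. i \<in> S})) * b i"
      using fin by (simp add: sum.If_cases Diff_eq)
    then show ?thesis
      by (simp only: with_i without)
  qed
  have "(\<Sum>S\<in>?K. \<Sum>i\<in>U. if i \<in> S then a i else b i) = (\<Sum>i\<in>U. \<Sum>S\<in>?K. if i \<in> S then a i else b i)"
    by (rule sum.swap)
  also have "\<dots> = (\<Sum>i\<in>U. (of_nat (card U choose k) - of_nat ((card U - 1) choose k)) * a i
        + of_nat ((card U - 1) choose k) * b i)"
    by (rule sum.cong) (simp_all add: count)
  finally show ?thesis
    by (simp only: sum.distrib sum_distrib_left)
qed

lemma binomial_le_mult_binomial_Suc: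
  assumes "j < m"
  shows "m choose j \<le> m * (m choose Suc j)"
proof -
  have "m choose j \<le> (m - j) * (m choose j)"
    using assms by simp
  also have "\<dots> = Suc j * (m choose Suc j)"
    using binomial_absorb_comp[of m j] binomial_absorption[of j m] by simp
  also have "\<dots> \<le> m * (m choose Suc j)"
    using assms by (intro mult_right_mono) auto
  finally show ?thesis .
qed

lemma binomial_difference_weighted_less:
  fixes A B :: real
  assumes "0 < A" "(real n - 1) * A < B" "k < n"
  shows "(real (n choose k) - real ((n - 1) choose k)) * A < real ((n - 1) choose k) * B"
proof (cases k)
  case 0
  have "0 \<le> (real n - 1) * A"
    using assms by simp
  then show ?thesis
    using 0 assms(2) by simp
next
  case (Suc j)
  obtain m where m: "n = Suc m"
    using assms(3) by (cases n) auto
  have "j < m"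
    using assms(3) Suc m by simp
  have "(real (n choose k) - real ((n - 1) choose k)) * A = real (m choose j) * A"
    using m Suc by simp
  also have "\<dots> \<le> real m * real (m choose Suc j) * A"
    using binomial_le_mult_binomial_Suc[OF \<open>j < m\<close>] assms(1)
    by (intro mult_right_mono) (simp_all flip: of_nat_mult)
  also have "\<dots> < real (m choose Suc j) * B"
    using assms(2) \<open>j < m\<close> m by simp
  finally show ?thesis
    using m Suc by simp
qed

lemma sum_lessThan_if_less_two:
  fixes x y :: real
  assumes "2 \<le> n"
  shows "(\<Sum>i<n. if i < 2 then x else y) = 2 * x + (real n - 2) * y"
  using assms
proof (induction n rule: dec_induct)
  case base
  then show ?case by (simp add: numeral_2_eq_2)
next
  case (step m)
  then show ?case by (simp add: algebra_simps)
qed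

definition class_value :: "nat \<Rightarrow> real \<Rightarrow> real \<Rightarrow> nat \<Rightarrow> real" where
  "class_value n M eps k =
     (\<Sum>v\<in>{v\<in>profiles n M. card (chi n v) = k}. (\<Prod>i<n. pval M eps i (v i)) * (\<Sum>i<n. v i))"

lemma finite_profiles: "finite (profiles n M)"
  unfolding profiles_def Vset_def by (intro finite_PiE) auto

lemma card_chi_le: "card (chi n v) \<le> n"
  using card_mono[of "{..<n}" "chi n v"] by (auto simp: chi_def)

lemma welfare_le_unanimity:
  assumes "is_scf n M f" "ordinal n M f" "anonymous n M f"
    and "\<And>k. k < n \<Longrightarrow> class_value n M eps k \<le> 0" "0 \<le> class_value n M eps n"
  shows "welfare n M eps f \<le> welfare n M eps (unanimity n)"
proof -
  have "(\<Sum>v\<in>profiles n M. ((\<Prod>i<n. pval M eps i (v i)) * (\<Sum>i<n. v i)) * f v)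
      \<le> (\<Sum>v\<in>profiles n M. ((\<Prod>i<n. pval M eps i (v i)) * (\<Sum>i<n. v i))
            * (if card (chi n v) = n then 1 else 0))"
  proof (rule sum_mult_fibrewise_const_le[OF finite_profiles,
        where g = "\<lambda>v. card (chi n v)" and P = "\<lambda>k. k = n"])
    show "\<And>k. k \<in> (\<lambda>v. card (chi n v)) ` profiles n M \<Longrightarrow> k \<noteq> n \<Longrightarrow>
            (\<Sum>v\<in>{v\<in>profiles n M. card (chi n v) = k}. (\<Prod>i<n. pval M eps i (v i)) * (\<Sum>i<n. v i)) \<le> 0"
      using assms(4) card_chi_le by (fastforce simp: class_value_def le_neq_implies_less)
  qed (use assms ordinal_anonymous_card_chi_eq in \<open>auto simp: is_scf_def class_value_def\<close>)
  then show ?thesis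
    by (simp add: welfare_def unanimity_def ac_simps)
qed

definition support_value :: "real \<Rightarrow> nat \<Rightarrow> real" where
  "support_value M i = (if i < 2 then M else 1)"

definition opposition_cost :: "real \<Rightarrow> nat \<Rightarrow> real" where
  "opposition_cost M i = (if i < 2 then M^2 else 1)"

definition base_profile :: "nat \<Rightarrow> real \<Rightarrow> nat set \<Rightarrow> nat \<Rightarrow> real" where
  "base_profile n M S =
     (\<lambda>i. if i < n then if i \<in> S then support_value M i else - opposition_cost M i else undefined)"

lemma chi_base_profile: "0 < M \<Longrightarrow> S \<subseteq> {..<n} \<Longrightarrow> chi n (base_profile n M S) = S"
  by (auto simp: chi_def base_profile_def support_value_def opposition_cost_def not_less)

lemma base_profile_in_profiles: "base_profile n M S \<in> profiles n M"
  by (auto simp: profiles_def Vset_def base_profile_def support_value_def opposition_cost_def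
      PiE_def extensional_def)

(* M \<noteq> 1 keeps the four values apart; for M = 1 the case distinction in pval
   would assign probability eps to the high-stakes value M. *)
lemma pval_zero:
  assumes "0 < M" "M \<noteq> 1" "x \<in> Vset M"
  shows "pval M 0 i x
    = (if x = (if 0 < x then support_value M i else - opposition_cost M i) then 1/2 else 0)"
proof -
  have "0 < M^2"
    using assms(1) by simp
  then show ?thesis
    using assms by (auto simp: Vset_def pval_def support_value_def opposition_cost_def power2_eq_1_iff)
qed

lemma prod_pval_zero:
  assumes "0 < M" "M \<noteq> 1" "v \<in> profiles n M"
  shows "(\<Prod>i<n. pval M 0 i (v i)) = (if v = base_profile n M (chi n v) then (1/2)^n else 0)"
proof -
  let ?b = "base_profile n M (chi n v)"
  have factor: "pval M 0 i (v i) = (if v i = ?b i then 1/2 else 0)" if "i < n" for i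
    using assms that by (simp add: pval_zero profiles_def PiE_iff base_profile_def chi_def)
  have "v = ?b \<longleftrightarrow> (\<forall>i<n. v i = ?b i)"
  proof
    assume "\<forall>i<n. v i = ?b i"
    then show "v = ?b"
      using assms(3) base_profile_in_profiles by (intro PiE_ext[of _ "{..<n}" "\<lambda>_. Vset M"]) (auto simp: profiles_def)
  qed simp
  then show ?thesis
    using factor by (auto intro: prod_zero)
qed

lemma class_value_zero:
  assumes "0 < M" "M \<noteq> 1"
  shows "class_value n M 0 k = (1/2)^n *
    ((real (n choose k) - real ((n - 1) choose k)) * (\<Sum>i<n. support_value M i)
      - real ((n - 1) choose k) * (\<Sum>i<n. opposition_cost M i))"
proof -
  let ?K = "{S. S \<subseteq> {..<n} \<and> card S = k}"
  have "base_profile n M ` ?K \<subseteq> {v\<in>profiles n M. card (chi n v) = k}"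
    using chi_base_profile[OF assms(1)] base_profile_in_profiles by auto
  moreover have "v \<in> base_profile n M ` ?K"
    if "v \<in> profiles n M" "card (chi n v) = k" "v = base_profile n M (chi n v)" for v
    using that by (intro image_eqI[of v _ "chi n v"]) (auto simp: chi_def)
  ultimately have "class_value n M 0 k = (\<Sum>v\<in>base_profile n M ` ?K. (1/2)^n * (\<Sum>i<n. v i))"
    unfolding class_value_def using finite_profiles
    by (intro sum.mono_neutral_cong_right)
      (auto simp: prod_pval_zero[OF assms] base_profile_in_profiles chi_base_profile[OF assms(1)])
  also have "\<dots> = (\<Sum>S\<in>?K. (1/2)^n * (\<Sum>i<n. base_profile n M S i))"
    by (rule sum.reindex_cong[OF inj_on_inverseI[of _ "chi n"]]) (auto simp: chi_base_profile[OF assms(1)])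
  also have "\<dots> = (1/2)^n * (\<Sum>S\<in>?K. \<Sum>i<n. if i \<in> S then support_value M i else - opposition_cost M i)"
    by (simp add: sum_distrib_left base_profile_def)
  finally show ?thesis
    by (simp add: sum_subsets_card_if_mem sum_negf)
qed

lemma condA_iff:
  fixes M :: real
  assumes "0 < n"
  shows "2 / real n * (-(M^2) + M + real n - 2) + (real n - 2) / real n * (2 * M + real n - 4) < 0
    \<longleftrightarrow> (real n - 1) * (2 * M + (real n - 2)) < 2 * M^2 + (real n - 2)"
proof -
  let ?L = "2 / real n * (-(M^2) + M + real n - 2) + (real n - 2) / real n * (2 * M + real n - 4)"
  have "?L < 0 \<longleftrightarrow> real n * ?L < 0"
    using assms by (simp add: mult_less_0_iff)
  also have "real n * ?L = (real n - 1) * (2 * M + (real n - 2)) - (2 * M^2 + (real n - 2))"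
    using assms by (simp add: field_simps power2_eq_square)
  finally show ?thesis
    by simp
qed

lemma class_value_zero_signs:
  fixes M :: real
  assumes "3 \<le> n" "0 < M" "(real n - 1) * (2 * M + (real n - 2)) < 2 * M^2 + (real n - 2)"
  shows "k < n \<Longrightarrow> class_value n M 0 k < 0" and "0 < class_value n M 0 n"
proof -
  have "M \<noteq> 1"
    using assms by (auto simp: algebra_simps)
  have sums: "(\<Sum>i<n. support_value M i) = 2 * M + (real n - 2)"
    "(\<Sum>i<n. opposition_cost M i) = 2 * M^2 + (real n - 2)"
    using assms(1) by (simp_all add: support_value_def opposition_cost_def sum_lessThan_if_less_two)
  have "0 < 2 * M + (real n - 2)"
    using assms(1,2) by simp
  note formula = class_value_zero[OF assms(2) \<open>M \<noteq> 1\<close>]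
  show "class_value n M 0 k < 0" if "k < n"
    using binomial_difference_weighted_less[OF \<open>0 < 2 * M + (real n - 2)\<close> assms(3) that]
    by (simp add: formula sums mult_less_0_iff)
  show "0 < class_value n M 0 n"
    using \<open>0 < 2 * M + (real n - 2)\<close> assms(1) by (simp add: formula sums binomial_eq_0)
qed

lemma pval_affine: "pval M eps i x = pval M 0 i x + eps * (pval M 1 i x - pval M 0 i x)"
  unfolding pval_def by auto

lemma class_value_tendsto: "((\<lambda>eps. class_value n M eps k) \<longlongrightarrow> class_value n M 0 k) (at_right 0)"
proof -
  have "isCont (\<lambda>eps. class_value n M eps k) 0"
    unfolding class_value_def by (subst pval_affine) (intro continuous_intros)
  then show ?thesis
    by (simp add: isCont_def filterlim_at_split)
qed

theorem lemma4:
  fixes n :: nat and M :: real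
  assumes "n \<ge> 3" and "M > 0"
    and condA: "2 / real n * (-(M^2) + M + real n - 2)
                + (real n - 2) / real n * (2 * M + real n - 4) < 0"
    and condB: "2 * M - (real n - 2) > 0"
  shows "\<exists>eps0 > 0. \<forall>eps. 0 < eps \<and> eps < eps0 \<longrightarrow>
           (\<forall>f. is_scf n M f \<and> ordinal n M f \<and> anonymous n M f \<longrightarrow>
                welfare n M eps f \<le> welfare n M eps (unanimity n))"
proof -
  have "(real n - 1) * (2 * M + (real n - 2)) < 2 * M^2 + (real n - 2)"
    using condA condA_iff[of n M] assms(1) by simp
  note signs = class_value_zero_signs[OF assms(1,2) this]
  have "\<forall>\<^sub>F eps in at_right 0. (\<forall>k\<in>{..<n}. class_value n M eps k < 0) \<and> 0 < class_value n M eps n"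
    using signs by (intro eventually_conj eventually_ball_finite ballI
        order_tendstoD[OF class_value_tendsto]) auto
  then obtain eps0 :: real where "0 < eps0" and small:
    "\<And>eps. 0 < eps \<Longrightarrow> eps < eps0 \<Longrightarrow> (\<forall>k<n. class_value n M eps k < 0) \<and> 0 < class_value n M eps n"
    unfolding eventually_at_right_field by auto
  show ?thesis
    using \<open>0 < eps0\<close> small welfare_le_unanimity by (meson less_imp_le)
qed

end
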